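(* The column Capelli bitableaux $[i_1,\dots,i_h|j_1,\dots,j_h]$ ($h\ge0$, $i_r,j_r\in\{1,\dots,n\}$, the empty one being $1$) span $\mathbf{U}(gl(n))$ as a vector space; likewise the column Capelli *-bitableaux $[i_1,\dots,i_h|j_1,\dots,j_h]^*$ span $\mathbf{U}(gl(n))$.
   Context: Virtual variables: let $A_0=\{\alpha_1,\dots,\alpha_{m_0}\}$ (positive virtual symbols, parity $0$), $A_1=\{\beta_1,\dots,\beta_{m_1}\}$ (negative virtual symbols, parity $1$), $L=\{1,\dots,n\}$ (proper symbols, parity $1$), $m_0,m_1$ sufficiently large. $gl(m_0|m_1+n)$ is the Lie superalgebra with homogeneous basis $e_{a,b}$ of parity $|a|+|b|\bmod 2$ and superbracket $[e_{a,b},e_{c,d}]=\delta_{bc}e_{a,d}-(-1)^{(|a|+|b|)(|c|+|d|)}\delta_{ad}e_{c,b}$; $\mathbf{U}(gl(n))\subset \mathbf{U}(gl(m_0|m_1+n))$ via $e_{i,j}$, $i,j\in L$. A product $e_{a_m,b_m}\cdots e_{a_1,b_1}$ is irregular if there are $i\le m$ and a virtual $\gamma$ with $\#\{j\le i:b_j=\gamma\}>\#\{j<i:a_j=\gamma\}$; $\mathbf{Irr}$ is the left ideal they generate; it is known that $Virt=\mathbf{U}(gl(n))\oplus\mathbf{Irr}$ is a subalgebra with $\mathbf{Irr}$ a two-sided ideal, and $\mathfrak p:Virt\to\mathbf{U}(gl(n))$ is the projection with kernel $\mathbf{Irr}$. The column Capelli bitableau is $[i_1,\dots,i_h|j_1,\dots,j_h]=\mathfrak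 p(e_{i_1\alpha_1}\cdots e_{i_h\alpha_h}e_{\alpha_1j_1}\cdots e_{\alpha_hj_h})$ with $\alpha_1,\dots,\alpha_h$ distinct positive virtual symbols, and the column Capelli *-bitableau is $[i_1,\dots,i_h|j_1,\dots,j_h]^*=\mathfrak p(e_{i_1\beta_1}\cdots e_{i_h\beta_h}e_{\beta_1j_1}\cdots e_{\beta_hj_h})$ with $\beta_1,\dots,\beta_h$ distinct negative virtual symbols. *)

theory Defs
  imports Main
begin

text \<open>Symbols: positive virtual (Pos, parity 0), negative virtual (Neg, parity 1),
  proper (Prop k, parity 1, with 1 \<le> k \<le> n). Infinitely many virtual symbols
  (reading of "m0, m1 sufficiently large").\<close>
datatype sym = Pos nat | Neg nat | Prop nat

fun par :: "sym \<Rightarrow> bool" where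
  "par (Pos _) = False" | "par (Neg _) = True" | "par (Prop _) = True"

fun virtual :: "sym \<Rightarrow> bool" where
  "virtual (Prop _) = False" | "virtual _ = True"

fun vsym :: "nat \<Rightarrow> sym \<Rightarrow> bool" where
  "vsym n (Prop k) = (1 \<le> k \<and> k \<le> n)" | "vsym n _ = True"

type_synonym gen = "sym \<times> sym"   \<comment> \<open>(a,b) stands for e_{a,b}\<close>

definition vgen :: "nat \<Rightarrow> gen \<Rightarrow> bool" where
  "vgen n g = (vsym n (fst g) \<and> vsym n (snd g))"

definition gpar :: "gen \<Rightarrow> bool" where
  "gpar g = (par (fst g) \<noteq> par (snd g))"

definition ssign :: "gen \<Rightarrow> gen \<Rightarrow> 'k::comm_ring_1" where
  "ssign x y = (if gpar x \<and> gpar y then -1 else 1)"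

text \<open>Free associative algebra on the generators: a word (list, read left to right
  as a product) is a monomial; elements are coefficient functions on words.\<close>
type_synonym 'k fa = "gen list \<Rightarrow> 'k"

definition fzero :: "'k::comm_ring_1 fa" where "fzero = (\<lambda>_. 0)"
definition fadd :: "'k::comm_ring_1 fa \<Rightarrow> 'k fa \<Rightarrow> 'k fa" where
  "fadd f g = (\<lambda>w. f w + g w)"
definition fsmult :: "'k::comm_ring_1 \<Rightarrow> 'k fa \<Rightarrow> 'k fa" where
  "fsmult c f = (\<lambda>w. c * f w)"
definition fdiff :: "'k::comm_ring_1 fa \<Rightarrow> 'k fa \<Rightarrow> 'k fa" where
  "fdiff f g = (\<lambda>w. f w - g w)"
definition mono :: "gen list \<Rightarrow> 'k::comm_ring_1 fa" where
  "mono v = (\<lambda>w. if w = v then 1 else 0)"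
definition fmul :: "'k::comm_ring_1 fa \<Rightarrow> 'k fa \<Rightarrow> 'k fa" where
  "fmul f g = (\<lambda>w. \<Sum>i\<le>length w. f (take i w) * g (drop i w))"

inductive_set lspan :: "'k::comm_ring_1 fa set \<Rightarrow> 'k fa set" for S where
  lspan_zero: "fzero \<in> lspan S"
| lspan_step: "x \<in> S \<Longrightarrow> y \<in> lspan S \<Longrightarrow> fadd (fsmult c x) y \<in> lspan S"

definition sbr :: "gen \<Rightarrow> gen \<Rightarrow> 'k::comm_ring_1 fa" where
  "sbr x y = fadd (if snd x = fst y then mono [(fst x, snd y)] else fzero)
                  (fsmult (- ssign x y) (if fst x = snd y then mono [(fst y, snd x)] else fzero))"

definition rel :: "gen \<Rightarrow> gen \<Rightarrow> 'k::comm_ring_1 fa" where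
  "rel x y = fdiff (fdiff (mono [x, y]) (fsmult (ssign x y) (mono [y, x]))) (sbr x y)"

text \<open>Two-sided ideal of the defining relations of U(gl(m0|m1+n)).\<close>
definition Iid :: "nat \<Rightarrow> 'k::comm_ring_1 fa set" where
  "Iid n = lspan {fmul (mono u) (fmul (rel x y) (mono v)) | u v x y.
      (\<forall>g\<in>set u. vgen n g) \<and> (\<forall>g\<in>set v. vgen n g) \<and> vgen n x \<and> vgen n y}"

text \<open>Subsets modulo the ideal: the set of all representatives of classes in S.\<close>
definition modI :: "nat \<Rightarrow> 'k::comm_ring_1 fa set \<Rightarrow> 'k fa set" where
  "modI n S = {x. \<exists>y\<in>S. fdiff x y \<in> Iid n}"

text \<open>Irregular monomials. The word w = [e_{a_m b_m}, ..., e_{a_1 b_1}] (left to right),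
  so rev w ! (j-1) = (a_j, b_j).\<close>
definition irregular :: "gen list \<Rightarrow> bool" where
  "irregular w = (let v = rev w in \<exists>i<length v. \<exists>\<gamma>. virtual \<gamma> \<and>
      card {j. j \<le> i \<and> snd (v ! j) = \<gamma>} > card {j. j < i \<and> fst (v ! j) = \<gamma>})"

text \<open>Representatives of elements of the left ideal Irr.\<close>
definition IrrL :: "nat \<Rightarrow> 'k::comm_ring_1 fa set" where
  "IrrL n = modI n (lspan {mono (u @ w) | u w.
      (\<forall>g\<in>set u. vgen n g) \<and> (\<forall>g\<in>set w. vgen n g) \<and> irregular w})"

text \<open>Representatives of elements of U(gl(n)).\<close>
definition Ugl :: "nat \<Rightarrow> 'k::comm_ring_1 fa set" where
  "Ugl n = modI n (lspan {mono w | w. \<forall>g\<in>set w. \<exists>i j. g = (Prop i, Prop j)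
      \<and> 1 \<le> i \<and> i \<le> n \<and> 1 \<le> j \<and> j \<le> n})"

text \<open>The projection p : Virt \<rightarrow> U(gl(n)) with kernel Irr; p x is returned as
  the set of representatives of the class p(x).\<close>
definition proj :: "nat \<Rightarrow> 'k::comm_ring_1 fa \<Rightarrow> 'k fa set" where
  "proj n x = {u \<in> Ugl n. fdiff x u \<in> IrrL n}"

text \<open>The word e_{i_1 al_1} ... e_{i_h al_h} e_{al_1 j_1} ... e_{al_h j_h},
  with al_r = alpha r (alpha = Pos or Neg, giving distinct virtual symbols).\<close>
definition cword :: "(nat \<Rightarrow> sym) \<Rightarrow> nat list \<Rightarrow> nat list \<Rightarrow> gen list" where
  "cword alpha is js =
     map (\<lambda>r. (Prop (is ! r), alpha (Suc r))) [0..<length is] @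
     map (\<lambda>r. (alpha (Suc r), Prop (js ! r))) [0..<length is]"

text \<open>All column Capelli bitableaux (alpha = Pos) resp. *-bitableaux (alpha = Neg),
  as representatives.\<close>
definition Bitab :: "nat \<Rightarrow> (nat \<Rightarrow> sym) \<Rightarrow> 'k::comm_ring_1 fa set" where
  "Bitab n alpha = \<Union> {proj n (mono (cword alpha is js)) | is js.
      length is = length js \<and> set is \<subseteq> {1..n} \<and> set js \<subseteq> {1..n}}"

end

theory Submission
  imports Defs "HOL-Library.Function_Algebras"
begin

text \<open>
  Write \<open>e(a,b)\<close> for the generators and \<open>\<equiv>\<close> for congruence modulo \<open>Irr\<close>. The monomial
  \<open>e(i\<^sub>1,\<alpha>\<^sub>1)\<cdots>e(i\<^sub>h,\<alpha>\<^sub>h) e(\<alpha>\<^sub>1,j\<^sub>1)\<cdots>e(\<alpha>\<^sub>h,j\<^sub>h)\<close> defining a bitableau is congruent,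
  up to a nonzero scalar and to terms of lower degree in \<open>U(gl(n))\<close>, to \<open>e(i\<^sub>h,j\<^sub>h)\<cdots>e(i\<^sub>1,j\<^sub>1)\<close>.
  Since these products span \<open>U(gl(n))\<close>, induction on the degree shows that the bitableaux span it.

  Moving \<open>e(\<alpha>\<^sub>h,j\<^sub>h)\<close> left until it meets
  \<open>e(i\<^sub>h,\<alpha>\<^sub>h)\<close> costs only a sign, as no other factor involves \<open>\<alpha>\<^sub>h\<close>. Then
  \<open>e(i\<^sub>h,\<alpha>\<^sub>h) e(\<alpha>\<^sub>h,j\<^sub>h) \<equiv> e(i\<^sub>h,j\<^sub>h)\<close>, because the reversed product and the commutator term
  \<open>e(\<alpha>\<^sub>h,\<alpha>\<^sub>h)\<close> are irregular. Moving \<open>e(i\<^sub>h,j\<^sub>h)\<close> to the front creates only commutators that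
  are bitableau monomials of length \<open>h - 1\<close>, hence of lower degree, and what remains is
  \<open>e(i\<^sub>h,j\<^sub>h)\<close> times a bitableau monomial of length \<open>h - 1\<close>.
\<close>

abbreviation monom :: "gen list \<Rightarrow> 'k::comm_ring_1 fa" where
  "monom \<equiv> Defs.mono"

section \<open>The free algebra\<close>

lemma fadd_eq_plus: "fadd f g = f + g"
  by (auto simp: fadd_def)

lemma fdiff_eq_minus: "fdiff f g = f - g"
  by (auto simp: fdiff_def)

lemma fzero_eq_zero: "fzero = 0"
  by (auto simp: fzero_def)

lemma fmul_monom_left:
  "fmul (monom u) f = (\<lambda>w. if length u \<le> length w \<and> take (length u) w = u
    then f (drop (length u) w) else 0)"
proof
  fix w :: "gen list"
  have "fmul (monom u) f w = (\<Sum>i\<le>length w. if i = length u then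
      (if take (length u) w = u then f (drop (length u) w) else 0) else 0)"
    unfolding fmul_def mono_def by (rule sum.cong) auto
  also have "\<dots> = (if length u \<le> length w \<and> take (length u) w = u
      then f (drop (length u) w) else 0)"
    by simp
  finally show "fmul (monom u) f w = (if length u \<le> length w \<and> take (length u) w = u
      then f (drop (length u) w) else 0)" .
qed

lemma fmul_monom_monom: "fmul (monom u) (monom v) = monom (u @ v)"
  unfolding fmul_monom_left
  by (rule ext) (auto simp: mono_def append_eq_conv_conj, metis append_take_drop_id)

lemma fmul_monom_assoc: "fmul (monom u) (fmul (monom v) f) = fmul (monom (u @ v)) f"
  by (rule ext) (auto simp: fmul_monom_left take_add min_def add.commute)

lemma fmul_add_left: "fmul (f + g) h = fmul f h + fmul g (h :: 'k::comm_ring_1 fa)"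
  by (rule ext) (simp add: fmul_def distrib_right sum.distrib)

lemma fmul_add_right: "fmul h (f + g) = fmul h f + fmul h (g :: 'k::comm_ring_1 fa)"
  by (rule ext) (simp add: fmul_def distrib_left sum.distrib)

lemma fmul_diff_left: "fmul (f - g) h = fmul f h - fmul g (h :: 'k::comm_ring_1 fa)"
  by (rule ext) (simp add: fmul_def left_diff_distrib sum_subtractf)

lemma fmul_diff_right: "fmul h (f - g) = fmul h f - fmul h (g :: 'k::comm_ring_1 fa)"
  by (rule ext) (simp add: fmul_def right_diff_distrib sum_subtractf)

lemma fmul_fsmult_left: "fmul (fsmult c f) h = fsmult c (fmul f (h :: 'k::comm_ring_1 fa))"
  by (rule ext) (simp add: fmul_def fsmult_def sum_distrib_left mult.assoc)

lemma fmul_fsmult_right: "fmul h (fsmult c f) = fsmult c (fmul h (f :: 'k::comm_ring_1 fa))"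
  by (rule ext) (simp add: fmul_def fsmult_def sum_distrib_left algebra_simps)

lemma fmul_zero_left: "fmul 0 h = (0 :: 'k::comm_ring_1 fa)"
  by (rule ext) (simp add: fmul_def)

lemma fmul_zero_right: "fmul h 0 = (0 :: 'k::comm_ring_1 fa)"
  by (rule ext) (simp add: fmul_def)

lemma fa_lambda_simps [simp]:
  "(\<lambda>w. 0) = (0 :: 'k::comm_ring_1 fa)"
  "(\<lambda>w. f w + g w) = (f + g :: 'k fa)"
  "(\<lambda>w. f w - g w) = (f - g :: 'k fa)"
  by (rule ext, simp)+

lemma fsmult_diff: "fsmult c (x - y) = fsmult c x - fsmult c (y :: 'k::comm_ring_1 fa)"
  by (rule ext) (simp add: fsmult_def algebra_simps)

lemma fsmult_zero: "fsmult c 0 = (0 :: 'k::comm_ring_1 fa)"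
  by (rule ext) (simp add: fsmult_def)

lemma fsmult_one: "fsmult 1 x = (x :: 'k::comm_ring_1 fa)"
  by (rule ext) (simp add: fsmult_def)

section \<open>Subspaces and linear spans\<close>

definition fsubspace :: "'k::comm_ring_1 fa set \<Rightarrow> bool" where
  "fsubspace X \<longleftrightarrow> 0 \<in> X \<and> (\<forall>x\<in>X. \<forall>y\<in>X. x + y \<in> X) \<and> (\<forall>c. \<forall>x\<in>X. fsmult c x \<in> X)"

lemma fsubspace_zero: "fsubspace X \<Longrightarrow> 0 \<in> X"
  by (simp add: fsubspace_def)

lemma fsubspace_add: "fsubspace X \<Longrightarrow> x \<in> X \<Longrightarrow> y \<in> X \<Longrightarrow> x + y \<in> X"
  by (simp add: fsubspace_def)

lemma fsubspace_fsmult: "fsubspace X \<Longrightarrow> x \<in> X \<Longrightarrow> fsmult c x \<in> X"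
  by (simp add: fsubspace_def)

lemma fsubspace_diff:
  assumes "fsubspace X" "x \<in> X" "y \<in> X"
  shows "x - y \<in> X"
proof -
  have "x - y = x + fsmult (-1) y"
    by (rule ext) (simp add: fsmult_def)
  then show ?thesis
    using assms fsubspace_add fsubspace_fsmult by metis
qed

lemma fsubspace_add_diff:
  assumes "fsubspace X" "x - x' \<in> X" "y - y' \<in> X"
  shows "(x + y) - (x' + y') \<in> X"
proof -
  have "(x + y) - (x' + y') = (x - x') + (y - y')"
    by simp
  show ?thesis
    unfolding \<open>(x + y) - (x' + y') = (x - x') + (y - y')\<close> by (rule fsubspace_add[OF assms])
qed

lemma fsubspace_diff_trans:
  assumes "fsubspace X" "x - y \<in> X" "y - z \<in> X"
  shows "x - z \<in> X"
proof -
  have "x - z = (x - y) + (y - z)"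
    by simp
  show ?thesis
    unfolding \<open>x - z = (x - y) + (y - z)\<close> by (rule fsubspace_add[OF assms])
qed

lemma fsubspace_lspan: "fsubspace (lspan S)"
proof -
  have add: "x + y \<in> lspan S" if "x \<in> lspan S" "y \<in> lspan S" for x y
    using that
  proof (induction x rule: lspan.induct)
    case lspan_zero
    then show ?case by (simp add: fzero_eq_zero)
  next
    case (lspan_step s x c)
    have "fadd (fsmult c s) x + y = fadd (fsmult c s) (x + y)"
      by (simp add: fadd_eq_plus add.assoc)
    then show ?case
      using lspan_step by (metis lspan.lspan_step)
  qed
  have smult: "fsmult d x \<in> lspan S" if "x \<in> lspan S" for d x
    using that
  proof (induction x rule: lspan.induct)
    case lspan_zero
    have "fsmult d fzero = fzero"
      by (rule ext) (simp add: fsmult_def fzero_def)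
    then show ?case by (simp add: lspan.lspan_zero)
  next
    case (lspan_step s x c)
    have "fsmult d (fadd (fsmult c s) x) = fadd (fsmult (d * c) s) (fsmult d x)"
      by (rule ext) (simp add: fsmult_def fadd_def algebra_simps)
    then show ?case
      using lspan_step by (simp add: lspan.lspan_step)
  qed
  show ?thesis
    unfolding fsubspace_def
    using lspan.lspan_zero[of S] by (simp add: fzero_eq_zero add smult)
qed

lemma lspan_superset: "s \<in> S \<Longrightarrow> s \<in> lspan S"
proof -
  assume "s \<in> S"
  then have "fadd (fsmult 1 s) fzero \<in> lspan S"
    by (intro lspan.intros)
  moreover have "fadd (fsmult 1 s) fzero = s"
    by (rule ext) (simp add: fsmult_def fadd_def fzero_def)
  ultimately show ?thesis by simp
qed

lemma lspan_linear_image: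
  assumes "\<And>x y. L (x + y) = L x + L y" "\<And>c x. L (fsmult c x) = fsmult c (L x)"
    and "\<And>s. s \<in> S \<Longrightarrow> L s \<in> T" "fsubspace T"
  shows "x \<in> lspan S \<Longrightarrow> L x \<in> T"
proof (induction x rule: lspan.induct)
  case lspan_zero
  have "L 0 = L 0 + L 0"
    using assms(1)[of 0 0] by simp
  then show ?case
    using assms(4) by (simp add: fzero_eq_zero fsubspace_zero)
next
  case (lspan_step s x c)
  then show ?case
    using assms by (auto simp: fadd_eq_plus intro!: fsubspace_add fsubspace_fsmult)
qed

lemma lspan_minimal:
  assumes "fsubspace T" "S \<subseteq> T"
  shows "lspan S \<subseteq> T"
  using lspan_linear_image[where L = "\<lambda>x. x", OF _ _ _ assms(1)] assms(2) by blast

lemma lspan_mono: "S \<subseteq> T \<Longrightarrow> lspan S \<subseteq> lspan T"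
  by (intro lspan_minimal fsubspace_lspan) (auto intro: lspan_superset)

section \<open>The defining ideal and the ideal of irregular elements\<close>

definition vgens :: "nat \<Rightarrow> gen list \<Rightarrow> bool" where
  "vgens n w \<longleftrightarrow> (\<forall>g\<in>set w. vgen n g)"

lemma vgens_simps [simp]:
  "vgens n []"
  "vgens n (g # w) \<longleftrightarrow> vgen n g \<and> vgens n w"
  "vgens n (w @ w') \<longleftrightarrow> vgens n w \<and> vgens n w'"
  by (auto simp: vgens_def)

lemma vsym_virtual: "virtual s \<Longrightarrow> vsym n s"
  by (cases s) auto

lemma fsubspace_Iid: "fsubspace (Iid n)"
  unfolding Iid_def by (rule fsubspace_lspan)

lemma relation_in_Iid:
  assumes "vgens n u" "vgens n v" "vgen n x" "vgen n y"
  shows "fmul (monom u) (fmul (rel x y) (monom v)) \<in> (Iid n :: 'k::comm_ring_1 fa set)"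
  unfolding Iid_def by (rule lspan_superset) (use assms in \<open>unfold vgens_def; blast\<close>)

lemma swap_in_Iid:
  assumes "vgens n u" "vgens n v" "vgen n x" "vgen n y"
  shows "monom (u @ x # y # v) - (fsmult (ssign x y) (monom (u @ y # x # v))
      + (if snd x = fst y then monom (u @ (fst x, snd y) # v) else 0)
      - fsmult (ssign x y) (if fst x = snd y then monom (u @ (fst y, snd x) # v) else 0))
    \<in> (Iid n :: 'k::comm_ring_1 fa set)"
proof -
  have eq: "fmul (monom u) (fmul (rel x y) (monom v)) = monom (u @ x # y # v)
      - (fsmult (ssign x y) (monom (u @ y # x # v))
      + (if snd x = fst y then monom (u @ (fst x, snd y) # v) else 0)
      - fsmult (ssign x y) (if fst x = snd y then monom (u @ (fst y, snd x) # v) else 0))"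
    by (simp add: rel_def sbr_def fdiff_eq_minus fadd_eq_plus fzero_eq_zero fmul_diff_left
        fmul_add_left fmul_fsmult_left fmul_diff_right fmul_add_right fmul_fsmult_right
        fmul_monom_monom fmul_zero_left fmul_zero_right fsmult_zero)
      (auto simp: fun_eq_iff fsmult_def algebra_simps)
  show ?thesis
    using relation_in_Iid[OF assms] unfolding eq .
qed

lemma fmul_monom_Iid:
  assumes "vgens n a" "x \<in> Iid n"
  shows "fmul (monom a) x \<in> (Iid n :: 'k::comm_ring_1 fa set)"
proof (rule lspan_linear_image[where L = "fmul (monom a)", OF _ _ _ _ assms(2)[unfolded Iid_def],
      folded Iid_def])
  fix s
  assume "s \<in> {fmul (monom u) (fmul (rel x y) (monom v)) |u v x y.
      (\<forall>g\<in>set u. vgen n g) \<and> (\<forall>g\<in>set v. vgen n g) \<and> vgen n x \<and> vgen n y}"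
  then obtain u v x y where "s = fmul (monom u) (fmul (rel x y) (monom v))"
    and "vgens n u" "vgens n v" "vgen n x" "vgen n y"
    by (auto simp: vgens_def)
  then show "fmul (monom a) s \<in> Iid n"
    using relation_in_Iid[of n "a @ u" v x y] assms(1) by (simp add: fmul_monom_assoc)
qed (simp_all add: fmul_add_right fmul_fsmult_right fsubspace_Iid)

lemma modI_iff: "x \<in> modI n X \<longleftrightarrow> (\<exists>y\<in>X. x - y \<in> Iid n)"
  by (simp add: modI_def fdiff_eq_minus)

lemma subset_modI: "X \<subseteq> modI n X"
proof
  fix x
  assume "x \<in> X"
  then show "x \<in> modI n X"
    using fsubspace_zero[OF fsubspace_Iid, of n] unfolding modI_iff by (intro bexI[of _ x]) simp_all
qed

lemma fsubspace_modI:
  assumes "fsubspace X"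
  shows "fsubspace (modI n X)"
  unfolding fsubspace_def
proof (intro conjI ballI allI)
  show "0 \<in> modI n X"
    using subset_modI fsubspace_zero[OF assms] by blast
next
  fix x y
  assume "x \<in> modI n X" "y \<in> modI n X"
  then obtain x' y' where "x' \<in> X" "y' \<in> X" "x - x' \<in> Iid n" "y - y' \<in> Iid n"
    unfolding modI_iff by blast
  then have "x' + y' \<in> X" "x + y - (x' + y') \<in> Iid n"
    by (simp_all add: fsubspace_add[OF assms] fsubspace_add_diff[OF fsubspace_Iid])
  then show "x + y \<in> modI n X"
    unfolding modI_iff by blast
next
  fix c x
  assume "x \<in> modI n X"
  then obtain x' where "x' \<in> X" "x - x' \<in> Iid n"
    unfolding modI_iff by blast
  then show "fsmult c x \<in> modI n X"
    unfolding modI_iff by (intro bexI[of _ "fsmult c x'"])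
      (simp_all add: fsmult_diff[symmetric] fsubspace_fsmult[OF fsubspace_Iid] fsubspace_fsmult[OF assms])
qed

lemma modI_mono: "X \<subseteq> Y \<Longrightarrow> modI n X \<subseteq> modI n Y"
  by (auto simp: modI_def)

lemma modI_modI: "modI n (modI n X) \<subseteq> modI n X"
proof
  fix x
  assume "x \<in> modI n (modI n X)"
  then obtain y z where "z \<in> X" "x - y \<in> Iid n" "y - z \<in> Iid n"
    by (auto simp: modI_iff)
  then show "x \<in> modI n X"
    unfolding modI_iff by (blast intro: fsubspace_diff_trans[OF fsubspace_Iid])
qed

definition irr_span :: "nat \<Rightarrow> 'k::comm_ring_1 fa set" where
  "irr_span n = lspan {monom (u @ w) | u w.
      (\<forall>g\<in>set u. vgen n g) \<and> (\<forall>g\<in>set w. vgen n g) \<and> irregular w}"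

lemma monom_in_irr_span:
  assumes "vgens n u" "vgens n w" "irregular w"
  shows "monom (u @ w) \<in> (irr_span n :: 'k::comm_ring_1 fa set)"
  unfolding irr_span_def by (rule lspan_superset) (use assms in \<open>unfold vgens_def; blast\<close>)

lemma IrrL_eq_modI_irr_span: "IrrL n = modI n (irr_span n)"
  by (simp add: IrrL_def irr_span_def)

lemma fsubspace_IrrL: "fsubspace (IrrL n)"
  unfolding IrrL_eq_modI_irr_span irr_span_def by (intro fsubspace_modI fsubspace_lspan)

lemma Iid_subset_IrrL: "Iid n \<subseteq> IrrL n"
proof
  fix x
  assume "x \<in> Iid n"
  moreover have "0 \<in> irr_span n"
    unfolding irr_span_def by (rule fsubspace_zero[OF fsubspace_lspan])
  ultimately show "x \<in> IrrL n"
    unfolding IrrL_eq_modI_irr_span modI_iff by (intro bexI[of _ 0]) simp_all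
qed

lemma irregular_in_IrrL:
  assumes "vgens n w" "irregular w"
  shows "monom w \<in> (IrrL n :: 'k::comm_ring_1 fa set)"
proof -
  have "monom w \<in> (irr_span n :: 'k fa set)"
    using monom_in_irr_span[of n "[]" w] assms by simp
  then show ?thesis
    unfolding IrrL_eq_modI_irr_span by (rule subsetD[OF subset_modI])
qed

lemma fmul_monom_IrrL:
  assumes "vgens n a" "x \<in> IrrL n"
  shows "fmul (monom a) x \<in> (IrrL n :: 'k::comm_ring_1 fa set)"
proof -
  obtain y where y: "y \<in> irr_span n" "x - y \<in> Iid n"
    using assms(2) unfolding IrrL_eq_modI_irr_span modI_iff by blast
  have "fmul (monom a) y \<in> (irr_span n :: 'k fa set)"
  proof (rule lspan_linear_image[where L = "fmul (monom a)", OF _ _ _ _ y(1)[unfolded irr_span_def],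
        folded irr_span_def])
    fix s :: "'k fa"
    assume "s \<in> {monom (u @ w) | u w. (\<forall>g\<in>set u. vgen n g) \<and> (\<forall>g\<in>set w. vgen n g) \<and> irregular w}"
    then obtain u w where "s = monom (u @ w)" "vgens n u" "vgens n w" "irregular w"
      by (auto simp: vgens_def)
    then show "fmul (monom a) s \<in> irr_span n"
      using monom_in_irr_span[of n "a @ u" w] assms(1) by (simp add: fmul_monom_monom)
  qed (simp_all add: fmul_add_right fmul_fsmult_right irr_span_def fsubspace_lspan)
  moreover have "fmul (monom a) x - fmul (monom a) y \<in> Iid n"
    using fmul_monom_Iid[OF assms(1) y(2)] by (simp add: fmul_diff_right)
  ultimately show ?thesis
    unfolding IrrL_eq_modI_irr_span modI_iff by blast
qed

section \<open>Reordering monomials\<close>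

lemma irregularI:
  assumes "virtual \<gamma>" "snd x = \<gamma>" "\<forall>r\<in>set R. fst r \<noteq> \<gamma>"
  shows "irregular (Q @ x # R)"
proof -
  let ?v = "rev (Q @ x # R)"
  have v: "?v = rev R @ x # rev Q"
    by simp
  have "{j. j < length R \<and> fst (?v ! j) = \<gamma>} = {}"
    using assms(3) by (auto simp: v nth_append) (metis length_rev nth_mem set_rev)
  moreover have "length R \<in> {j. j \<le> length R \<and> snd (?v ! j) = \<gamma>}"
    using assms(2) by (simp add: v nth_append)
  then have "card {j. j \<le> length R \<and> snd (?v ! j) = \<gamma>} > 0"
    by (subst card_gt_0_iff) auto
  ultimately have "card {j. j < length R \<and> fst (?v ! j) = \<gamma>}
      < card {j. j \<le> length R \<and> snd (?v ! j) = \<gamma>}"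
    by (simp only: card.empty)
  then show ?thesis
    unfolding irregular_def Let_def using assms(1)
    by (intro exI[of _ "length R"] conjI exI[of _ \<gamma>]) simp_all
qed

lemma contract_virtual_pair:
  assumes "virtual \<gamma>" "vsym n a" "vsym n b" "vgens n u" "vgens n v" "\<forall>g\<in>set v. fst g \<noteq> \<gamma>"
  shows "monom (u @ (a, \<gamma>) # (\<gamma>, b) # v) - monom (u @ (a, b) # v) \<in> (IrrL n :: 'k::comm_ring_1 fa set)"
proof -
  let ?s = "ssign (a, \<gamma>) (\<gamma>, b) :: 'k"
  let ?t = "if a = b then monom (u @ (\<gamma>, \<gamma>) # v) else 0 :: 'k fa"
  have vgen: "vgen n (a, \<gamma>)" "vgen n (\<gamma>, b)" "vgen n (\<gamma>, \<gamma>)"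
    using assms(1-3) by (auto simp: vgen_def vsym_virtual)
  have "monom (u @ (a, \<gamma>) # (\<gamma>, b) # v)
      - (fsmult ?s (monom (u @ (\<gamma>, b) # (a, \<gamma>) # v)) + monom (u @ (a, b) # v) - fsmult ?s ?t)
      \<in> Iid n"
    using swap_in_Iid[OF assms(4,5) vgen(1,2)] by (simp only: fst_conv snd_conv simp_thms if_True)
  then have swap: "monom (u @ (a, \<gamma>) # (\<gamma>, b) # v)
      - (fsmult ?s (monom (u @ (\<gamma>, b) # (a, \<gamma>) # v)) + monom (u @ (a, b) # v) - fsmult ?s ?t)
      \<in> IrrL n"
    using Iid_subset_IrrL by blast
  \<comment> \<open>the reordered word and the commutator term are both irregular\<close>
  have swapped: "monom (u @ (\<gamma>, b) # (a, \<gamma>) # v) \<in> (IrrL n :: 'k fa set)"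
    using assms vgen irregularI[of \<gamma> "(a, \<gamma>)" v "u @ [(\<gamma>, b)]"]
    by (intro irregular_in_IrrL) simp_all
  have commutator: "?t \<in> IrrL n"
    using assms vgen irregularI[of \<gamma> "(\<gamma>, \<gamma>)" v u]
    by (simp add: irregular_in_IrrL fsubspace_zero[OF fsubspace_IrrL])
  have eq: "monom (u @ (a, \<gamma>) # (\<gamma>, b) # v) - monom (u @ (a, b) # v)
      = (monom (u @ (a, \<gamma>) # (\<gamma>, b) # v)
        - (fsmult ?s (monom (u @ (\<gamma>, b) # (a, \<gamma>) # v)) + monom (u @ (a, b) # v) - fsmult ?s ?t))
      + fsmult ?s (monom (u @ (\<gamma>, b) # (a, \<gamma>) # v)) - fsmult ?s ?t"
    by (simp add: algebra_simps)
  show ?thesis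
    unfolding eq
    by (rule fsubspace_diff[OF fsubspace_IrrL fsubspace_add[OF fsubspace_IrrL swap
          fsubspace_fsmult[OF fsubspace_IrrL swapped]] fsubspace_fsmult[OF fsubspace_IrrL commutator]])
qed

lemma commute_past_in_Iid:
  assumes "vgens n Cs" "vgen n B" "\<forall>C\<in>set Cs. snd C \<noteq> fst B \<and> fst C \<noteq> snd B"
  shows "vgens n Q \<Longrightarrow> vgens n R \<Longrightarrow> \<exists>c. c \<noteq> 0 \<and>
    monom (Q @ Cs @ B # R) - fsmult c (monom (Q @ B # Cs @ R)) \<in> (Iid n :: 'k::field fa set)"
  using assms
proof (induction Cs arbitrary: Q)
  case Nil
  then show ?case
    using fsubspace_zero[OF fsubspace_Iid] by (intro exI[of _ 1]) (simp add: fsmult_one)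
next
  case (Cons C Cs)
  obtain c where c: "c \<noteq> 0"
    "monom ((Q @ [C]) @ Cs @ B # R) - fsmult c (monom ((Q @ [C]) @ B # Cs @ R)) \<in> (Iid n :: 'k fa set)"
    using Cons.IH[of "Q @ [C]"] Cons.prems by auto
  have swap: "monom (Q @ C # B # Cs @ R) - fsmult (ssign C B) (monom (Q @ B # C # Cs @ R))
      \<in> (Iid n :: 'k fa set)"
    using swap_in_Iid[of n Q "Cs @ R" C B] Cons.prems by (simp add: fsmult_zero)
  have eq: "monom (Q @ (C # Cs) @ B # R) - fsmult (c * ssign C B) (monom (Q @ B # (C # Cs) @ R))
      = (monom ((Q @ [C]) @ Cs @ B # R) - fsmult c (monom ((Q @ [C]) @ B # Cs @ R)))
        + fsmult c (monom (Q @ C # B # Cs @ R) - fsmult (ssign C B) (monom (Q @ B # C # Cs @ R)))"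
    by (rule ext) (simp add: fsmult_def algebra_simps)
  have "monom (Q @ (C # Cs) @ B # R) - fsmult (c * ssign C B) (monom (Q @ B # (C # Cs) @ R))
      \<in> Iid n"
    unfolding eq using c(2) swap by (intro fsubspace_add[OF fsubspace_Iid] fsubspace_fsmult[OF fsubspace_Iid])
  then show ?case
    using c(1) by (intro exI[of _ "c * ssign C B"]) (simp add: ssign_def)
qed

lemma swap_virtual_gl_gen:
  assumes "virtual \<gamma>" "vgens n u" "vgens n v" "vsym n (Prop p)" "vsym n (Prop i)" "vsym n (Prop j)"
  shows "monom (u @ (Prop p, \<gamma>) # (Prop i, Prop j) # v) - monom (u @ (Prop i, Prop j) # (Prop p, \<gamma>) # v)
      + (if p = j then monom (u @ (Prop i, \<gamma>) # v) else 0) \<in> (Iid n :: 'k::comm_ring_1 fa set)"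
proof -
  let ?t = "if p = j then monom (u @ (Prop i, \<gamma>) # v) else 0 :: 'k fa"
  have sign: "ssign (Prop p, \<gamma>) (Prop i, Prop j) = (1 :: 'k)"
    by (simp add: ssign_def gpar_def)
  have no_contraction: "\<gamma> \<noteq> Prop i"
    using assms(1) by auto
  have eq: "monom (u @ (Prop p, \<gamma>) # (Prop i, Prop j) # v)
      - (monom (u @ (Prop i, Prop j) # (Prop p, \<gamma>) # v) + 0 - ?t)
    = monom (u @ (Prop p, \<gamma>) # (Prop i, Prop j) # v) - monom (u @ (Prop i, Prop j) # (Prop p, \<gamma>) # v)
      + ?t"
    by simp
  have "vgen n (Prop p, \<gamma>)" "vgen n (Prop i, Prop j)"
    using assms by (auto simp: vgen_def vsym_virtual)
  from swap_in_Iid[where 'k = 'k, OF assms(2,3) this]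
  show ?thesis
    unfolding sign fsmult_one fst_conv snd_conv if_not_P[OF no_contraction] sym.inject eq .
qed

lemma move_gl_gen_past_virtuals:
  fixes D :: "'k::comm_ring_1 fa set"
  assumes D: "fsubspace D" "Iid n \<subseteq> D"
    and ij: "vsym n (Prop i)" "vsym n (Prop j)"
  shows "\<forall>g\<in>set P. \<exists>p \<gamma>. g = (Prop p, \<gamma>) \<and> virtual \<gamma> \<and> vsym n (Prop p) \<Longrightarrow> vgens n Q \<Longrightarrow> vgens n S
    \<Longrightarrow> (\<And>P\<^sub>1 \<gamma> P\<^sub>2. P = P\<^sub>1 @ (Prop j, \<gamma>) # P\<^sub>2 \<Longrightarrow> monom (Q @ P\<^sub>1 @ (Prop i, \<gamma>) # P\<^sub>2 @ S) \<in> D)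
    \<Longrightarrow> monom (Q @ P @ (Prop i, Prop j) # S) - monom (Q @ (Prop i, Prop j) # P @ S) \<in> D"
proof (induction P arbitrary: Q)
  case Nil
  then show ?case
    by (simp add: fsubspace_zero[OF D(1)])
next
  case (Cons z P)
  obtain p \<gamma> where z: "z = (Prop p, \<gamma>)" "virtual \<gamma>" "vsym n (Prop p)"
    using Cons.prems(1) by auto
  let ?e = "(Prop i, Prop j)"
  let ?t = "if p = j then monom (Q @ (Prop i, \<gamma>) # P @ S) else 0 :: 'k fa"
  have "vgens n (P @ S)"
    using Cons.prems(1,3) by (auto simp: vgens_def vgen_def vsym_virtual)
  have IH: "monom ((Q @ [z]) @ P @ ?e # S) - monom ((Q @ [z]) @ ?e # P @ S) \<in> D"
  proof (rule Cons.IH)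
    fix P\<^sub>1 \<gamma>' P\<^sub>2
    assume "P = P\<^sub>1 @ (Prop j, \<gamma>') # P\<^sub>2"
    then show "monom ((Q @ [z]) @ P\<^sub>1 @ (Prop i, \<gamma>') # P\<^sub>2 @ S) \<in> D"
      using Cons.prems(4)[of "z # P\<^sub>1" \<gamma>' P\<^sub>2] by simp
  qed (use Cons.prems z in \<open>auto simp: vgen_def vsym_virtual\<close>)
  have swap: "monom (Q @ z # ?e # P @ S) - monom (Q @ ?e # z # P @ S) + ?t \<in> D"
    using swap_virtual_gl_gen[OF z(2) Cons.prems(2) \<open>vgens n (P @ S)\<close> z(3) ij] D(2) z(1) by auto
  have commutator: "?t \<in> D"
    using Cons.prems(4)[of "[]" \<gamma> P] z(1) fsubspace_zero[OF D(1)] by auto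
  have eq: "monom (Q @ (z # P) @ ?e # S) - monom (Q @ ?e # (z # P) @ S)
    = (monom ((Q @ [z]) @ P @ ?e # S) - monom ((Q @ [z]) @ ?e # P @ S))
      + ((monom (Q @ z # ?e # P @ S) - monom (Q @ ?e # z # P @ S) + ?t) - ?t)"
    by simp
  show ?case
    unfolding eq by (rule fsubspace_add[OF D(1) IH fsubspace_diff[OF D(1) swap commutator]])
qed

section \<open>The degree filtration of \<open>U(gl(n))\<close>\<close>

definition gl_gen :: "nat \<Rightarrow> gen \<Rightarrow> bool" where
  "gl_gen n g \<longleftrightarrow> (\<exists>i j. g = (Prop i, Prop j) \<and> 1 \<le> i \<and> i \<le> n \<and> 1 \<le> j \<and> j \<le> n)"

lemma Ugl_eq_modI_gl_gen: "Ugl n = modI n (lspan {monom w | w. \<forall>g\<in>set w. gl_gen n g})"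
  by (simp add: Ugl_def gl_gen_def)

lemma gl_gen_vgen: "gl_gen n g \<Longrightarrow> vgen n g"
  by (auto simp: gl_gen_def vgen_def)

definition gl_monoms_lt :: "nat \<Rightarrow> nat \<Rightarrow> 'k::comm_ring_1 fa set" where
  "gl_monoms_lt n k = {monom w | w. (\<forall>g\<in>set w. gl_gen n g) \<and> length w < k}"

text \<open>The elements of \<open>Virt\<close> whose projection to \<open>U(gl(n))\<close> has degree less than \<open>k\<close>.\<close>

definition deg_lt :: "nat \<Rightarrow> nat \<Rightarrow> 'k::comm_ring_1 fa set" where
  "deg_lt n k = {x. \<exists>g\<in>lspan (gl_monoms_lt n k). x - g \<in> IrrL n}"

lemma deg_ltI: "g \<in> lspan (gl_monoms_lt n k) \<Longrightarrow> x - g \<in> IrrL n \<Longrightarrow> x \<in> deg_lt n k"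
  unfolding deg_lt_def by blast

lemma fsubspace_deg_lt: "fsubspace (deg_lt n k :: 'k::comm_ring_1 fa set)"
  unfolding fsubspace_def
proof (intro conjI ballI allI)
  show "0 \<in> deg_lt n k"
    by (rule deg_ltI[of 0]) (simp_all add: fsubspace_zero fsubspace_lspan fsubspace_IrrL)
next
  fix x y :: "'k fa"
  assume "x \<in> deg_lt n k" "y \<in> deg_lt n k"
  then obtain g h where "g \<in> lspan (gl_monoms_lt n k)" "h \<in> lspan (gl_monoms_lt n k)"
    "x - g \<in> IrrL n" "y - h \<in> IrrL n"
    unfolding deg_lt_def by blast
  then show "x + y \<in> deg_lt n k"
    by (intro deg_ltI[of "g + h"] fsubspace_add[OF fsubspace_lspan] fsubspace_add_diff[OF fsubspace_IrrL])
next
  fix c x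
  assume "x \<in> deg_lt n k"
  then obtain g where "g \<in> lspan (gl_monoms_lt n k)" "x - g \<in> IrrL n"
    unfolding deg_lt_def by blast
  then show "fsmult c x \<in> deg_lt n k"
    by (intro deg_ltI[of "fsmult c g"])
      (simp_all add: fsubspace_fsmult fsubspace_lspan fsubspace_IrrL flip: fsmult_diff)
qed

lemma IrrL_subset_deg_lt: "IrrL n \<subseteq> deg_lt n k"
  using deg_ltI[of 0] by (auto simp: fsubspace_zero fsubspace_lspan)

lemma gl_monom_in_deg_lt:
  "\<forall>g\<in>set w. gl_gen n g \<Longrightarrow> length w < k \<Longrightarrow> monom w \<in> deg_lt n k"
  by (rule deg_ltI[of "monom w"])
    (auto simp: gl_monoms_lt_def fsubspace_zero fsubspace_IrrL intro!: lspan_superset)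

lemma deg_lt_mono: "k \<le> k' \<Longrightarrow> deg_lt n k \<subseteq> deg_lt n k'"
  using lspan_mono[of "gl_monoms_lt n k" "gl_monoms_lt n k'"]
  unfolding deg_lt_def by (fastforce simp: gl_monoms_lt_def)

lemma fmul_gl_gen_deg_lt:
  assumes "gl_gen n e" "x \<in> deg_lt n k"
  shows "fmul (monom [e]) x \<in> deg_lt n (Suc k)"
proof -
  obtain g where g: "g \<in> lspan (gl_monoms_lt n k)" "x - g \<in> IrrL n"
    using assms(2) unfolding deg_lt_def by blast
  have "fmul (monom [e]) g \<in> lspan (gl_monoms_lt n (Suc k))"
  proof (rule lspan_linear_image[where L = "fmul (monom [e])", OF _ _ _ _ g(1)])
    fix s
    assume "s \<in> gl_monoms_lt n k"
    then obtain w where "s = monom w" "\<forall>g\<in>set w. gl_gen n g" "length w < k"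
      by (auto simp: gl_monoms_lt_def)
    then show "fmul (monom [e]) s \<in> lspan (gl_monoms_lt n (Suc k))"
      using assms(1) by (intro lspan_superset)
        (auto simp: gl_monoms_lt_def fmul_monom_monom intro!: exI[of _ "e # w"])
  qed (simp_all add: fmul_add_right fmul_fsmult_right fsubspace_lspan)
  moreover have "fmul (monom [e]) x - fmul (monom [e]) g \<in> IrrL n"
    using fmul_monom_IrrL[of n "[e]", OF _ g(2)] assms(1)
    by (simp add: gl_gen_vgen fmul_diff_right)
  ultimately show ?thesis
    by (rule deg_ltI)
qed

lemma deg_lt_SucI:
  assumes "x - fsmult c (monom w) \<in> (deg_lt n k :: 'k::comm_ring_1 fa set)"
    and "\<forall>g\<in>set w. gl_gen n g" "length w \<le> k"
  shows "x \<in> deg_lt n (Suc k)"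
proof -
  have "x = (x - fsmult c (monom w)) + fsmult c (monom w)"
    by simp
  also have "\<dots> \<in> deg_lt n (Suc k)"
    using assms deg_lt_mono[of k "Suc k" n]
    by (intro fsubspace_add[OF fsubspace_deg_lt] fsubspace_fsmult[OF fsubspace_deg_lt] gl_monom_in_deg_lt) auto
  finally show ?thesis .
qed

section \<open>Leading terms of the Capelli bitableau monomials\<close>

definition cword_left :: "(nat \<Rightarrow> sym) \<Rightarrow> nat list \<Rightarrow> gen list" where
  "cword_left al xs = map (\<lambda>r. (Prop (xs ! r), al (Suc r))) [0..<length xs]"

definition cword_right :: "(nat \<Rightarrow> sym) \<Rightarrow> nat list \<Rightarrow> gen list" where
  "cword_right al ys = map (\<lambda>r. (al (Suc r), Prop (ys ! r))) [0..<length ys]"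

definition gl_word :: "nat list \<Rightarrow> nat list \<Rightarrow> gen list" where
  "gl_word xs ys = rev (map (\<lambda>(i, j). (Prop i, Prop j)) (zip xs ys))"

lemma length_cword_left [simp]: "length (cword_left al xs) = length xs"
  by (simp add: cword_left_def)

lemma cword_split: "length xs = length ys \<Longrightarrow> cword al xs ys = cword_left al xs @ cword_right al ys"
  by (simp add: cword_def cword_left_def cword_right_def)

lemma cword_left_snoc: "cword_left al (xs @ [i]) = cword_left al xs @ [(Prop i, al (Suc (length xs)))]"
  by (auto simp: cword_left_def nth_append intro!: map_cong)

lemma cword_right_snoc: "cword_right al (ys @ [j]) = cword_right al ys @ [(al (Suc (length ys)), Prop j)]"
  by (auto simp: cword_right_def nth_append intro!: map_cong)

lemma gl_word_snoc:
  "length xs = length ys \<Longrightarrow> gl_word (xs @ [i]) (ys @ [j]) = (Prop i, Prop j) # gl_word xs ys"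
  by (simp add: gl_word_def)

lemma nth_cword_left: "m < length xs \<Longrightarrow> cword_left al xs ! m = (Prop (xs ! m), al (Suc m))"
  by (simp add: cword_left_def)

lemma cword_left_update:
  "m < length xs \<Longrightarrow> cword_left al (xs[m := i]) = (cword_left al xs)[m := (Prop i, al (Suc m))]"
  by (auto simp: cword_left_def nth_list_update intro!: nth_equalityI)

lemma gl_word_gl_gen:
  assumes "set xs \<subseteq> {1..n}" "set ys \<subseteq> {1..n}"
  shows "\<forall>g\<in>set (gl_word xs ys). gl_gen n g"
proof
  fix g
  assume "g \<in> set (gl_word xs ys)"
  then obtain a b where ab: "(a, b) \<in> set (zip xs ys)" "g = (Prop a, Prop b)"
    by (auto simp: gl_word_def)
  then have "a \<in> set xs" "b \<in> set ys"
    by (auto dest: set_zip_leftD set_zip_rightD)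
  then show "gl_gen n g"
    using assms ab(2) by (auto simp: gl_gen_def)
qed

lemma gl_word_surj:
  assumes "\<forall>g\<in>set w. gl_gen n g"
  obtains xs ys where "length xs = length w" "length ys = length w"
    "set xs \<subseteq> {1..n}" "set ys \<subseteq> {1..n}" "gl_word xs ys = w"
proof -
  have "\<exists>xs ys. length xs = length w \<and> length ys = length w
      \<and> set xs \<subseteq> {1..n} \<and> set ys \<subseteq> {1..n} \<and> gl_word xs ys = w"
    using assms
  proof (induction w)
    case Nil
    then show ?case by (simp add: gl_word_def)
  next
    case (Cons g w)
    then obtain xs ys i j where "length xs = length w" "length ys = length w"
      "set xs \<subseteq> {1..n}" "set ys \<subseteq> {1..n}" "gl_word xs ys = w"
      "g = (Prop i, Prop j)" "i \<in> {1..n}" "j \<in> {1..n}"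
      by (auto simp: gl_gen_def)
    then show ?case
      by (intro exI[of _ "xs @ [i]"] exI[of _ "ys @ [j]"]) (simp add: gl_word_snoc)
  qed
  then show ?thesis
    using that by blast
qed

locale virtual_labels =
  fixes al :: "nat \<Rightarrow> sym"
  assumes inj_al: "inj al"
    and virtual_al: "virtual (al r)"
begin

lemma vgens_cword_left: "set xs \<subseteq> {1..n} \<Longrightarrow> vgens n (cword_left al xs)"
  by (auto simp: cword_left_def vgens_def vgen_def vsym_virtual virtual_al dest!: nth_mem)

lemma vgens_cword_right: "set ys \<subseteq> {1..n} \<Longrightarrow> vgens n (cword_right al ys)"
  by (auto simp: cword_right_def vgens_def vgen_def vsym_virtual virtual_al dest!: nth_mem)

lemma cword_left_shape:
  "set xs \<subseteq> {1..n} \<Longrightarrow> \<forall>g\<in>set (cword_left al xs). \<exists>p \<gamma>. g = (Prop p, \<gamma>) \<and> virtual \<gamma> \<and> vsym n (Prop p)"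
  by (auto simp: cword_left_def virtual_al dest!: nth_mem)

lemma cword_right_fresh: "g \<in> set (cword_right al ys) \<Longrightarrow> fst g \<noteq> al (Suc (length ys))"
  using inj_al by (auto simp: cword_right_def dest: injD)

lemma cword_right_virtual: "g \<in> set (cword_right al ys) \<Longrightarrow> virtual (fst g) \<and> \<not> virtual (snd g)"
  by (auto simp: cword_right_def virtual_al)

lemma move_gl_gen_to_front:
  assumes cwords_deg: "\<And>xs ys. length xs = k \<Longrightarrow> length ys = k \<Longrightarrow> set xs \<subseteq> {1..n}
      \<Longrightarrow> set ys \<subseteq> {1..n} \<Longrightarrow> monom (cword al xs ys) \<in> (deg_lt n (Suc k) :: 'k::comm_ring_1 fa set)"
    and len: "length xs = k" "length ys = k"
    and range: "set xs \<subseteq> {1..n}" "set ys \<subseteq> {1..n}" "i \<in> {1..n}" "j \<in> {1..n}"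
  shows "monom (cword_left al xs @ (Prop i, Prop j) # cword_right al ys)
      - monom ((Prop i, Prop j) # cword al xs ys) \<in> (deg_lt n (Suc k) :: 'k fa set)"
proof -
  have "monom ([] @ cword_left al xs @ (Prop i, Prop j) # cword_right al ys)
      - monom ([] @ (Prop i, Prop j) # cword_left al xs @ cword_right al ys) \<in> (deg_lt n (Suc k) :: 'k fa set)"
  proof (rule move_gl_gen_past_virtuals)
    show "Iid n \<subseteq> deg_lt n (Suc k)"
      using Iid_subset_IrrL IrrL_subset_deg_lt by blast
  next
    fix P\<^sub>1 \<gamma> P\<^sub>2
    assume split: "cword_left al xs = P\<^sub>1 @ (Prop j, \<gamma>) # P\<^sub>2"
    define m where "m = length P\<^sub>1"
    have m: "m < length xs"
      using arg_cong[OF split, of length] by (simp add: m_def)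
    moreover have "cword_left al xs ! m = (Prop j, \<gamma>)"
      using split by (simp add: m_def)
    ultimately have "\<gamma> = al (Suc m)"
      by (simp add: nth_cword_left)
    then have "cword_left al (xs[m := i]) = P\<^sub>1 @ (Prop i, \<gamma>) # P\<^sub>2"
      using split m by (simp add: cword_left_update m_def)
    moreover have "set (xs[m := i]) \<subseteq> {1..n}"
      using range by (auto dest: set_update_subset_insert[THEN subsetD])
    ultimately show "monom ([] @ P\<^sub>1 @ (Prop i, \<gamma>) # P\<^sub>2 @ cword_right al ys)
        \<in> (deg_lt n (Suc k) :: 'k fa set)"
      using cwords_deg[of "xs[m := i]" ys] len range by (simp add: cword_split)
  qed (use range cword_left_shape[OF range(1)] in \<open>simp_all add: fsubspace_deg_lt vgens_cword_right\<close>)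
  then show ?thesis
    using len by (simp add: cword_split)
qed

lemma contract_last_pair:
  assumes len: "length xs = length ys"
    and range: "set xs \<subseteq> {1..n}" "set ys \<subseteq> {1..n}" "i \<in> {1..n}" "j \<in> {1..n}"
  shows "\<exists>c. c \<noteq> 0 \<and> monom (cword al (xs @ [i]) (ys @ [j]))
      - fsmult c (monom (cword_left al xs @ (Prop i, Prop j) # cword_right al ys)) \<in> (IrrL n :: 'k::field fa set)"
proof -
  define P where "P = cword_left al xs"
  define Bs where "Bs = cword_right al ys"
  define \<gamma> where "\<gamma> = al (Suc (length ys))"
  have vP: "vgens n P" and vBs: "vgens n Bs" and v\<gamma>: "virtual \<gamma>"
    using range by (simp_all add: P_def Bs_def \<gamma>_def vgens_cword_left vgens_cword_right virtual_al)
  have cword: "cword al (xs @ [i]) (ys @ [j]) = P @ (Prop i, \<gamma>) # Bs @ [(\<gamma>, Prop j)]"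
    using len by (simp add: cword_split cword_left_snoc cword_right_snoc P_def Bs_def \<gamma>_def)
  have "\<forall>C\<in>set Bs. snd C \<noteq> \<gamma> \<and> fst C \<noteq> Prop j"
    using v\<gamma> cword_right_virtual by (fastforce simp: Bs_def)
  \<comment> \<open>hence \<open>e(\<gamma>,j)\<close> supercommutes with every factor of \<open>Bs\<close>\<close>
  then obtain c where c: "c \<noteq> 0" "monom (cword al (xs @ [i]) (ys @ [j]))
      - fsmult c (monom (P @ (Prop i, \<gamma>) # (\<gamma>, Prop j) # Bs)) \<in> (IrrL n :: 'k fa set)"
    using commute_past_in_Iid[of n Bs "(\<gamma>, Prop j)" "P @ [(Prop i, \<gamma>)]" "[]"]
      Iid_subset_IrrL vP vBs v\<gamma> range
    by (auto simp: cword vgen_def vsym_virtual)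
  have "monom (P @ (Prop i, \<gamma>) # (\<gamma>, Prop j) # Bs) - monom (P @ (Prop i, Prop j) # Bs) \<in> (IrrL n :: 'k fa set)"
    using contract_virtual_pair[where 'k = 'k, OF v\<gamma> _ _ vP vBs, of "Prop i" "Prop j"]
      cword_right_fresh[of _ ys] range
    by (simp add: Bs_def \<gamma>_def)
  then have "fsmult c (monom (P @ (Prop i, \<gamma>) # (\<gamma>, Prop j) # Bs)) - fsmult c (monom (P @ (Prop i, Prop j) # Bs))
      \<in> IrrL n"
    unfolding fsmult_diff[symmetric] by (rule fsubspace_fsmult[OF fsubspace_IrrL])
  then have "monom (cword al (xs @ [i]) (ys @ [j])) - fsmult c (monom (P @ (Prop i, Prop j) # Bs)) \<in> IrrL n"
    by (rule fsubspace_diff_trans[OF fsubspace_IrrL c(2)])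
  then show ?thesis
    using c(1) by (auto simp: P_def Bs_def)
qed

lemma cword_leading_term:
  "length xs = k \<Longrightarrow> length ys = k \<Longrightarrow> set xs \<subseteq> {1..n} \<Longrightarrow> set ys \<subseteq> {1..n} \<Longrightarrow>
    \<exists>c. c \<noteq> 0 \<and> monom (cword al xs ys) - fsmult c (monom (gl_word xs ys)) \<in> (deg_lt n k :: 'k::field fa set)"
proof (induction k arbitrary: xs ys)
  case 0
  then show ?case
    using IrrL_subset_deg_lt fsubspace_zero[OF fsubspace_IrrL]
    by (intro exI[of _ 1]) (auto simp: cword_def gl_word_def fsmult_one)
next
  case (Suc k)
  have cwords_deg: "monom (cword al xs ys) \<in> (deg_lt n (Suc k) :: 'k fa set)"
    if lens: "length xs = k" "length ys = k" "set xs \<subseteq> {1..n}" "set ys \<subseteq> {1..n}" for xs ys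
  proof -
    obtain c where "monom (cword al xs ys) - fsmult c (monom (gl_word xs ys)) \<in> (deg_lt n k :: 'k fa set)"
      using Suc.IH[OF lens] by blast
    then show ?thesis
      by (rule deg_lt_SucI) (use lens in \<open>simp_all add: gl_word_gl_gen gl_word_def\<close>)
  qed
  obtain xs' i ys' j where xs: "xs = xs' @ [i]" and ys: "ys = ys' @ [j]"
    using Suc.prems(1,2) by (metis length_Suc_conv_rev)
  have len: "length xs' = k" "length ys' = k"
    and range: "set xs' \<subseteq> {1..n}" "set ys' \<subseteq> {1..n}" "i \<in> {1..n}" "j \<in> {1..n}"
    using Suc.prems by (auto simp: xs ys)
  let ?e = "(Prop i, Prop j)"
  let ?mid = "cword_left al xs' @ ?e # cword_right al ys'"
  obtain c where c: "c \<noteq> 0" "monom (cword al xs ys) - fsmult c (monom ?mid) \<in> (IrrL n :: 'k fa set)"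
    using contract_last_pair[OF _ range] len by (auto simp: xs ys)
  have to_front: "monom ?mid - monom (?e # cword al xs' ys') \<in> (deg_lt n (Suc k) :: 'k fa set)"
    by (rule move_gl_gen_to_front[OF cwords_deg len range])
  obtain c' where c': "c' \<noteq> 0" and
    "monom (cword al xs' ys') - fsmult c' (monom (gl_word xs' ys')) \<in> (deg_lt n k :: 'k fa set)"
    using Suc.IH[OF len range(1,2)] by blast
  then have tail: "monom (?e # cword al xs' ys') - fsmult c' (monom (gl_word xs ys))
      \<in> (deg_lt n (Suc k) :: 'k fa set)"
    using fmul_gl_gen_deg_lt[of n ?e] range len
    by (force simp: gl_gen_def xs ys gl_word_snoc fmul_diff_right fmul_fsmult_right fmul_monom_monom)
  have "monom (cword al xs ys) - fsmult (c * c') (monom (gl_word xs ys))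
      = (monom (cword al xs ys) - fsmult c (monom ?mid))
        + fsmult c (monom ?mid - monom (?e # cword al xs' ys'))
        + fsmult c (monom (?e # cword al xs' ys') - fsmult c' (monom (gl_word xs ys)))"
    by (rule ext) (simp add: fsmult_def algebra_simps)
  also have "\<dots> \<in> deg_lt n (Suc k)"
    using c(2) to_front tail IrrL_subset_deg_lt
    by (intro fsubspace_add[OF fsubspace_deg_lt] fsubspace_fsmult[OF fsubspace_deg_lt]) auto
  finally show ?case
    using c(1) c' by (intro exI[of _ "c * c'"]) simp
qed

section \<open>Spanning\<close>

lemma Bitab_leading_term:
  assumes "\<forall>g\<in>set w. gl_gen n g"
  obtains c g where "c \<noteq> 0" "g \<in> lspan (gl_monoms_lt n (length w))"
    "fsmult c (monom w) + g \<in> (Bitab n al :: 'k::field fa set)"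
proof -
  define G where "G = {monom v :: 'k fa | v. \<forall>g\<in>set v. gl_gen n g}"
  obtain xs ys where xs: "length xs = length w" "length ys = length w"
    "set xs \<subseteq> {1..n}" "set ys \<subseteq> {1..n}" "gl_word xs ys = w"
    using gl_word_surj[OF assms] .
  obtain c g where c: "c \<noteq> 0" and g: "g \<in> lspan (gl_monoms_lt n (length w))"
    and irr: "monom (cword al xs ys) - fsmult c (monom w) - g \<in> (IrrL n :: 'k fa set)"
    using cword_leading_term[OF xs(1-4)] xs(5) unfolding deg_lt_def by blast
  define u where "u = fsmult c (monom w) + g"
  have "gl_monoms_lt n (length w) \<subseteq> G"
    by (auto simp: gl_monoms_lt_def G_def)
  then have "g \<in> lspan G"
    using lspan_mono g by blast
  moreover have "monom w \<in> lspan G"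
    using assms unfolding G_def by (intro lspan_superset) blast
  ultimately have "u \<in> Ugl n"
    unfolding Ugl_eq_modI_gl_gen u_def G_def[symmetric]
    by (intro subsetD[OF subset_modI] fsubspace_add[OF fsubspace_lspan] fsubspace_fsmult[OF fsubspace_lspan])
  moreover have "monom (cword al xs ys) - u \<in> IrrL n"
    using irr by (simp only: u_def diff_diff_eq)
  ultimately have "u \<in> proj n (monom (cword al xs ys))"
    unfolding proj_def fdiff_eq_minus by blast
  moreover have "proj n (monom (cword al xs ys)) \<in> {proj n (monom (cword al is js)) | is js.
      length is = length js \<and> set is \<subseteq> {1..n} \<and> set js \<subseteq> {1..n}}"
    using xs(1-4) by (intro CollectI exI[of _ xs] exI[of _ ys]) simp
  ultimately have "u \<in> Bitab n al"
    unfolding Bitab_def by (rule UnionI[rotated])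
  then show ?thesis
    using that c g by (simp add: u_def)
qed

lemma gl_monom_in_span_Bitab:
  assumes "\<forall>g\<in>set w. gl_gen n g"
  shows "monom w \<in> modI n (lspan (Bitab n al :: 'k::field fa set))"
  using assms
proof (induction "length w" arbitrary: w rule: less_induct)
  case less
  define M where "M = modI n (lspan (Bitab n al :: 'k fa set))"
  have M: "fsubspace M"
    unfolding M_def by (intro fsubspace_modI fsubspace_lspan)
  obtain c g where c: "c \<noteq> 0" and g: "g \<in> lspan (gl_monoms_lt n (length w))"
    and "fsmult c (monom w) + g \<in> (Bitab n al :: 'k fa set)"
    using Bitab_leading_term[OF less.prems] .
  then have u: "fsmult c (monom w) + g \<in> M"
    unfolding M_def by (intro subsetD[OF subset_modI] lspan_superset)
  have "gl_monoms_lt n (length w) \<subseteq> M"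
    using less.hyps by (auto simp: gl_monoms_lt_def M_def)
  then have "g \<in> M"
    using lspan_minimal[OF M] g by blast
  have "monom w = fsmult (1 / c) ((fsmult c (monom w) + g) - g)"
    using c by (rule_tac ext) (simp add: fsmult_def)
  also have "\<dots> \<in> M"
    by (rule fsubspace_fsmult[OF M fsubspace_diff[OF M u \<open>g \<in> M\<close>]])
  finally show ?case
    by (simp add: M_def)
qed

lemma span_Bitab: "modI n (lspan (Bitab n al :: 'k::field fa set)) = Ugl n"
proof
  have "fsubspace (Ugl n :: 'k fa set)"
    unfolding Ugl_def by (intro fsubspace_modI fsubspace_lspan)
  moreover have "Bitab n al \<subseteq> (Ugl n :: 'k fa set)"
    by (auto simp: Bitab_def proj_def)
  ultimately have "modI n (lspan (Bitab n al)) \<subseteq> modI n (Ugl n :: 'k fa set)"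
    by (intro modI_mono lspan_minimal)
  also have "\<dots> \<subseteq> Ugl n"
    unfolding Ugl_def by (rule modI_modI)
  finally show "modI n (lspan (Bitab n al)) \<subseteq> (Ugl n :: 'k fa set)" .
next
  have "lspan {monom w | w. \<forall>g\<in>set w. gl_gen n g} \<subseteq> modI n (lspan (Bitab n al :: 'k fa set))"
    by (rule lspan_minimal[OF fsubspace_modI[OF fsubspace_lspan]]) (auto intro: gl_monom_in_span_Bitab)
  then have "Ugl n \<subseteq> modI n (modI n (lspan (Bitab n al :: 'k fa set)))"
    unfolding Ugl_eq_modI_gl_gen by (rule modI_mono)
  then show "Ugl n \<subseteq> modI n (lspan (Bitab n al :: 'k fa set))"
    using modI_modI by (rule order_trans)
qed

end

theorem mainTheorem6:
  fixes n :: nat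
  shows "modI n (lspan (Bitab n Pos :: 'k::field_char_0 fa set)) = (Ugl n :: 'k fa set)
       \<and> modI n (lspan (Bitab n Neg :: 'k fa set)) = Ugl n"
proof -
  interpret pos: virtual_labels Pos
    by unfold_locales (auto simp: inj_def)
  interpret neg: virtual_labels Neg
    by unfold_locales (auto simp: inj_def)
  show ?thesis
    using pos.span_Bitab neg.span_Bitab by blast
qed

end
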